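(* Let $g:\mathbb N\to\mathbb N$ be superlinear. For every $\alpha\ge1$ there are $\eta,\gamma'\in(0,1)$ such that the subtractive adversary $V_{\mathrm{sub},\eta}$ satisfies: for every $m\ge1$ there are $p\in\mathcal{C}_g$ and $Q\in\Delta(\mathcal{C}_g)$ such that (1) for every $q\in\mathrm{supp}(Q)$, $d_{\mathrm{TV}}(p,q)\ge 4\alpha\,\mathrm{budget}(V_{\mathrm{sub},\eta})+4\gamma'$; and (2) $d_{\mathrm{TV}}(V_{\mathrm{sub},\eta}(p^m),V_{\mathrm{sub},\eta}(|Q|^m))\le\frac18$.
   Context: Let $\{B_i\}_{i\in\mathbb N}$ enumerate all finite subsets of $\mathbb N$. For $i,j,k\in\mathbb N$, $p_{i,j,k}=(1-\frac1j)\delta_{(0,0)}+(\frac1j-\frac1k)U_{B_i\times\{2j+1\}}+\frac1k\delta_{(i,2j+2)}$ on $\mathbb N\times\mathbb N$, and $\mathcal C_g=\{p_{i,j,g(j)}:i,j\in\mathbb N\}$. Superlinear: $g(j)/j\to\infty$. Samples are multisets. For a sample $S$: $\mathrm{constants}(S)$ = elements equal to $(0,0)$, $\mathrm{odds}(S)$ = elements of form $(o,2j+1)$, $\mathrm{ind}(S)$ = elements of form $(i,2j+2)$ ($i,j,o\in\mathbb N$), $\mathrm{noind}(S)=\mathrm{constants}(S)\cup\mathrm{odds}(S)$ (multisets). $\mathrm{choose}(S,n)$ is a uniformly random sub-multiset of $S$ of size $n$. The subtractive adversary is $V_{\mathrm{sub},\eta}(S)=\mathrm{choose}(\mathrm{noind}(S),(1-\eta)|S|)$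 if $|\mathrm{ind}(S)|\le\eta|S|$, and $V_{\mathrm{sub},\eta}(S)=\mathrm{noind}(S)\cup\mathrm{choose}(\mathrm{ind}(S),|\mathrm{ind}(S)|-\eta|S|)$ otherwise; its budget (fraction of points removed) is $\mathrm{budget}(V_{\mathrm{sub},\eta})=\eta$. For an adversary $V$ and distribution $P$ on samples, $V(P)$ is the distribution of $V(S)$, $S\sim P$. For $Q$ a distribution over $\mathcal C_g$, $|Q|^m$ is the distribution of $S$ obtained by drawing $q\sim Q$ then $S\sim q^m$. *)

theory Defs
  imports "HOL-Probability.Probability" "HOL-Library.Multiset"
begin

text \<open>Ground set N x N (N = nat, including 0). Distributions are pmfs on nat \<times> nat.\<close>

definition pijk :: "(nat \<Rightarrow> nat set) \<Rightarrow> nat \<Rightarrow> nat \<Rightarrow> nat \<Rightarrow> (nat \<times> nat) pmf" where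
  "pijk B i j k = embed_pmf (\<lambda>x.
      (1 - 1 / real j) * (if x = (0, 0) then 1 else 0)
    + (1 / real j - 1 / real k) * (indicator (B i \<times> {2 * j + 1}) x / real (card (B i)))
    + (1 / real k) * (if x = (i, 2 * j + 2) then 1 else 0))"

text \<open>Parameters for which the defining formula is a probability distribution.\<close>
definition valid_param :: "(nat \<Rightarrow> nat set) \<Rightarrow> (nat \<Rightarrow> nat) \<Rightarrow> nat \<Rightarrow> nat \<Rightarrow> bool" where
  "valid_param B g i j \<longleftrightarrow> 1 \<le> j \<and> j \<le> g j \<and> (B i = {} \<longrightarrow> g j = j)"

definition Cg :: "(nat \<Rightarrow> nat set) \<Rightarrow> (nat \<Rightarrow> nat) \<Rightarrow> (nat \<times> nat) pmf set" where
  "Cg B g = {pijk B i j (g j) | i j. valid_param B g i j}"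

definition superlinear :: "(nat \<Rightarrow> nat) \<Rightarrow> bool" where
  "superlinear g \<longleftrightarrow> filterlim (\<lambda>j. real (g j) / real j) at_top sequentially"

definition tv_dist :: "'a pmf \<Rightarrow> 'a pmf \<Rightarrow> real" where
  "tv_dist p q = (SUP A. \<bar>measure_pmf.prob p A - measure_pmf.prob q A\<bar>)"

fun sample_pmf :: "nat \<Rightarrow> 'a pmf \<Rightarrow> 'a multiset pmf" where
  "sample_pmf 0 p = return_pmf {#}"
| "sample_pmf (Suc m) p = bind_pmf p (\<lambda>x. map_pmf (add_mset x) (sample_pmf m p))"

text \<open>|Q|^m : draw q from Q, then m i.i.d. samples from q.\<close>
definition mix_sample_pmf :: "nat \<Rightarrow> 'a pmf pmf \<Rightarrow> 'a multiset pmf" where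
  "mix_sample_pmf m Q = bind_pmf Q (sample_pmf m)"

definition choose_mset :: "'a multiset \<Rightarrow> nat \<Rightarrow> 'a multiset pmf" where
  "choose_mset S n = pmf_of_set {T. T \<subseteq># S \<and> size T = n}"

definition is_const :: "nat \<times> nat \<Rightarrow> bool" where "is_const x \<longleftrightarrow> x = (0, 0)"
definition is_odd :: "nat \<times> nat \<Rightarrow> bool" where "is_odd x \<longleftrightarrow> odd (snd x)"
definition is_ind :: "nat \<times> nat \<Rightarrow> bool" where "is_ind x \<longleftrightarrow> even (snd x) \<and> 2 \<le> snd x"

definition ind :: "(nat \<times> nat) multiset \<Rightarrow> (nat \<times> nat) multiset" where
  "ind S = filter_mset is_ind S"
definition noind :: "(nat \<times> nat) multiset \<Rightarrow> (nat \<times> nat) multiset" where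
  "noind S = filter_mset is_const S + filter_mset is_odd S"

definition Vsub :: "real \<Rightarrow> (nat \<times> nat) multiset \<Rightarrow> (nat \<times> nat) multiset pmf" where
  "Vsub \<eta> S = (let r = nat \<lfloor>\<eta> * real (size S)\<rfloor> in
     if real (size (ind S)) \<le> \<eta> * real (size S)
     then choose_mset (noind S) (size S - r)
     else map_pmf (\<lambda>T. noind S + T) (choose_mset (ind S) (size (ind S) - r)))"

definition budget_sub :: "real \<Rightarrow> real" where "budget_sub \<eta> = \<eta>"

definition adv_apply :: "('a \<Rightarrow> 'b pmf) \<Rightarrow> 'a pmf \<Rightarrow> 'b pmf" where
  "adv_apply V P = bind_pmf P V"

end

theory Submission
  imports Defs
begin

text \<open>Take p = p_{i,j,k} with B_i = {0, ..., 2n - 1} and, for every code c in {0,1}^n,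
  q_c = p_{i_c,j,k} where B_{i_c} keeps exactly one point of each pair {2d, 2d + 1}. The points
  dropped by B_{i_c} carry half of the odd-layer mass 1/j - 1/k of p and none of q_c, so
  d_TV(p, q_c) >= (1/j - 1/k)/2, which exceeds 4 alpha eta + 4 gamma' for eta = 16/k and
  gamma' = 1/(32 j) once k = g(j) >= 256 alpha j.

  The only points revealing the index are the (i, 2j + 2), of mass 1/k. By Markov's inequality
  a sample of size m contains more than eta m of them with probability at most 1/16; otherwise
  the subtractive adversary deletes all of them. After swapping the index points of p and q_c,
  the law of q_c^m has a product density with respect to p^m, and on samples whose odd-layer
  points lie in distinct pairs these densities average to 1 over a uniform code. For n = 16 m^2
  the birthday bound makes a pair collision have probability at most m^2/n = 1/16.\<close>

lemma sample_pmf_Suc_right: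
  "sample_pmf (Suc m) p = bind_pmf (sample_pmf m p) (\<lambda>S. map_pmf (\<lambda>x. add_mset x S) p)"
  by (simp add: map_pmf_def bind_commute_pmf[of p])

lemma set_pmf_sample_pmf:
  "set_pmf (sample_pmf m p) \<subseteq> {S. set_mset S \<subseteq> set_pmf p \<and> size S = m}"
  by (induction m) fastforce+

lemma finite_msets_of_size:
  assumes "finite X"
  shows "finite {S. set_mset S \<subseteq> X \<and> size S = m}"
proof -
  have "{S. set_mset S \<subseteq> X \<and> size S = m} \<subseteq> mset ` {xs. set xs \<subseteq> X \<and> length xs = m}"
    by (auto simp: image_iff) (metis ex_mset set_mset_mset size_mset)
  moreover have "finite {xs. set xs \<subseteq> X \<and> length xs = m}"
    using finite_lists_length_eq[OF assms] by simp
  ultimately show ?thesis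
    by (meson finite_imageI finite_subset)
qed

lemma finite_set_pmf_sample_pmf:
  "finite (set_pmf p) \<Longrightarrow> finite (set_pmf (sample_pmf m p))"
  using set_pmf_sample_pmf finite_msets_of_size by (metis finite_subset)

lemma sample_pmf_map_pmf:
  "sample_pmf m (map_pmf f p) = map_pmf (image_mset f) (sample_pmf m p)"
  by (induction m) (simp_all add: bind_map_pmf map_bind_pmf map_pmf_comp)

lemma pmf_map_pmf_add_mset:
  "pmf (map_pmf (add_mset x) M) S = (if x \<in># S then pmf M (S - {#x#}) else 0)"
proof -
  have "add_mset x -` {S} = (if x \<in># S then {S - {#x#}} else {})"
    by (auto simp: insert_DiffM)
  then show ?thesis
    by (simp add: pmf_map measure_pmf_single)
qed

lemma measure_pmf_prob_bind_pmf:
  "measure_pmf.prob (bind_pmf M N) X = (\<integral>x. measure_pmf.prob (N x) X \<partial>M)"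
proof -
  have "emeasure (bind_pmf M N) X = (\<integral>\<^sup>+x. emeasure (N x) X \<partial>M)"
    by simp
  also have "\<dots> = (\<integral>\<^sup>+x. ennreal (measure_pmf.prob (N x) X) \<partial>M)"
    by (simp add: measure_pmf.emeasure_eq_measure)
  also have "\<dots> = ennreal (\<integral>x. measure_pmf.prob (N x) X \<partial>M)"
    by (intro nn_integral_eq_integral measure_pmf.integrable_const_bound[where B = 1]) auto
  finally show ?thesis
    by (simp add: measure_pmf.emeasure_eq_measure)
qed

lemma measure_pmf_eq_sum_Int:
  assumes "finite X" "set_pmf p \<subseteq> X"
  shows "measure_pmf.prob p E = (\<Sum>x\<in>X \<inter> E. pmf p x)"
proof -
  have "measure_pmf.prob p E = measure_pmf.prob p (X \<inter> E)"
    using assms(2) by (metis inf.absorb_iff2 inf_commute inf_left_commute measure_Int_set_pmf)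
  then show ?thesis
    using assms(1) by (simp add: measure_measure_pmf_finite)
qed

lemma integral_bind_pmf_finite:
  fixes f :: "'b \<Rightarrow> real"
  assumes finM: "finite (set_pmf M)" and finA: "finite A"
    and sub: "\<And>x. x \<in> set_pmf M \<Longrightarrow> set_pmf (N x) \<subseteq> A"
  shows "(\<integral>y. f y \<partial>bind_pmf M N) = (\<integral>x. (\<integral>y. f y \<partial>N x) \<partial>M)"
proof -
  have "(\<integral>y. f y \<partial>bind_pmf M N) = (\<Sum>a\<in>A. f a * (\<Sum>x\<in>set_pmf M. pmf (N x) a * pmf M x))"
    using finA finM sub by (subst integral_measure_pmf_real[where A = A])
      (auto simp: pmf_bind integral_measure_pmf_real)
  also have "\<dots> = (\<Sum>x\<in>set_pmf M. (\<Sum>a\<in>A. f a * pmf (N x) a) * pmf M x)"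
    by (simp add: sum_distrib_left sum_distrib_right mult_ac sum.swap[of _ A])
  also have "\<dots> = (\<integral>x. (\<integral>y. f y \<partial>N x) \<partial>M)"
    using finA finM sub
    by (simp add: integral_measure_pmf_real[where A = "set_pmf M"] integral_measure_pmf_real[where A = A]
        subset_iff)
  finally show ?thesis .
qed

lemma pmf_sample_pmf_reweight:
  assumes fin: "finite (set_pmf p)" and w: "\<And>x. pmf q x = w x * pmf p x"
  shows "pmf (sample_pmf m q) S = prod_mset (image_mset w S) * pmf (sample_pmf m p) S"
proof (induction m arbitrary: S)
  case 0
  then show ?case
    by (cases "S = {#}") (auto simp: pmf_return)
next
  case (Suc m)
  have supp_q: "set_pmf q \<subseteq> set_pmf p"
    using w by (auto simp: set_pmf_eq)
  have step: "pmf (map_pmf (add_mset x) (sample_pmf m q)) S * pmf q x =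
      prod_mset (image_mset w S) * (pmf (map_pmf (add_mset x) (sample_pmf m p)) S * pmf p x)" for x
  proof (cases "x \<in># S")
    case True
    then have "prod_mset (image_mset w S) = w x * prod_mset (image_mset w (S - {#x#}))"
      by (metis image_mset_add_mset insert_DiffM prod_mset.add_mset)
    then show ?thesis
      using True by (simp add: pmf_map_pmf_add_mset Suc w algebra_simps)
  qed (simp add: pmf_map_pmf_add_mset)
  have "pmf (sample_pmf (Suc m) q) S
      = (\<Sum>x\<in>set_pmf p. pmf (map_pmf (add_mset x) (sample_pmf m q)) S * pmf q x)"
    using fin supp_q by (simp add: pmf_bind integral_measure_pmf_real[where A = "set_pmf p"] subset_iff)
  also have "\<dots> = prod_mset (image_mset w S)
      * (\<Sum>x\<in>set_pmf p. pmf (map_pmf (add_mset x) (sample_pmf m p)) S * pmf p x)"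
    by (simp add: step sum_distrib_left)
  also have "(\<Sum>x\<in>set_pmf p. pmf (map_pmf (add_mset x) (sample_pmf m p)) S * pmf p x)
      = pmf (sample_pmf (Suc m) p) S"
    using fin by (simp add: pmf_bind integral_measure_pmf_real)
  finally show ?case .
qed

lemma integral_sample_pmf_reweight:
  fixes f :: "'a multiset \<Rightarrow> real"
  assumes fin: "finite (set_pmf p)" and w: "\<And>x. pmf q x = w x * pmf p x"
  shows "(\<integral>S. f S \<partial>sample_pmf m q) = (\<integral>S. prod_mset (image_mset w S) * f S \<partial>sample_pmf m p)"
proof -
  define SS where "SS = {S. set_mset S \<subseteq> set_pmf p \<and> size S = m}"
  have finSS: "finite SS"
    unfolding SS_def using finite_msets_of_size[OF fin] .
  have "set_pmf q \<subseteq> set_pmf p"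
    using w by (auto simp: set_pmf_eq)
  then have supp_q: "set_pmf (sample_pmf m q) \<subseteq> SS"
    using set_pmf_sample_pmf[of m q] by (auto simp: SS_def)
  have "(\<integral>S. f S \<partial>sample_pmf m q) = (\<Sum>S\<in>SS. f S * pmf (sample_pmf m q) S)"
    using finSS supp_q by (intro integral_measure_pmf_real) auto
  also have "\<dots> = (\<Sum>S\<in>SS. prod_mset (image_mset w S) * f S * pmf (sample_pmf m p) S)"
    by (simp add: pmf_sample_pmf_reweight[OF fin w] mult_ac)
  also have "\<dots> = (\<integral>S. prod_mset (image_mset w S) * f S \<partial>sample_pmf m p)"
    using finSS set_pmf_sample_pmf[of m p]
    by (intro integral_measure_pmf_real[symmetric]) (auto simp: SS_def)
  finally show ?thesis .
qed

lemma expectation_size_filter_mset_sample_pmf: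
  assumes fin: "finite (set_pmf p)"
  shows "(\<integral>S. real (size (filter_mset P S)) \<partial>sample_pmf m p) = real m * measure_pmf.prob p {x. P x}"
proof (induction m)
  case (Suc m)
  have step: "(\<integral>T. real (size (filter_mset P T)) \<partial>map_pmf (\<lambda>x. add_mset x S) p)
      = real (size (filter_mset P S)) + measure_pmf.prob p {x. P x}" for S
  proof -
    have "(\<integral>T. real (size (filter_mset P T)) \<partial>map_pmf (\<lambda>x. add_mset x S) p)
        = (\<integral>x. real (size (filter_mset P S)) + indicator {x. P x} x \<partial>p)"
      unfolding integral_map_pmf by (intro Bochner_Integration.integral_cong) (auto simp: indicator_def)
    then show ?thesis
      using fin by (simp add: integrable_measure_pmf_finite)
  qed
  have "(\<integral>S. real (size (filter_mset P S)) \<partial>sample_pmf (Suc m) p)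
      = (\<integral>S. real (size (filter_mset P S)) + measure_pmf.prob p {x. P x} \<partial>sample_pmf m p)"
    unfolding sample_pmf_Suc_right step[symmetric]
    using finite_set_pmf_sample_pmf[OF fin] finite_msets_of_size[OF fin] set_pmf_sample_pmf[of m p]
    by (intro integral_bind_pmf_finite[where A = "{S. set_mset S \<subseteq> set_pmf p \<and> size S = Suc m}"])
      force+
  also have "\<dots> = real (Suc m) * measure_pmf.prob p {x. P x}"
    using finite_set_pmf_sample_pmf[OF fin, of m] Suc
    by (simp add: integrable_measure_pmf_finite algebra_simps)
  finally show ?case .
qed simp

lemma prob_size_filter_mset_sample_pmf_ge:
  assumes fin: "finite (set_pmf p)" and c: "0 < c"
  shows "measure_pmf.prob (sample_pmf m p) {S. c \<le> real (size (filter_mset P S))}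
     \<le> real m * measure_pmf.prob p {x. P x} / c"
  using integral_Markov_inequality_measure[where A = "{}" and M = "sample_pmf m p"
      and u = "\<lambda>S. real (size (filter_mset P S))" and c = c]
    finite_set_pmf_sample_pmf[OF fin, of m] c
  by (simp add: integrable_measure_pmf_finite expectation_size_filter_mset_sample_pmf[OF fin])

section \<open>Birthday bound\<close>

definition multiplicity_free :: "'a multiset \<Rightarrow> bool" where
  "multiplicity_free M \<longleftrightarrow> (\<forall>x. count M x \<le> 1)"

lemma multiplicity_free_add_mset_iff:
  "multiplicity_free (add_mset a M) \<longleftrightarrow> multiplicity_free M \<and> a \<notin># M"
proof -
  have "count (add_mset a M) x \<le> 1 \<longleftrightarrow> count M x \<le> 1 \<and> (x = a \<longrightarrow> count M x = 0)" for x
    by auto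
  then show ?thesis
    unfolding multiplicity_free_def not_in_iff by auto
qed

lemma size_eq_card_set_mset_if_multiplicity_free:
  "multiplicity_free M \<Longrightarrow> size M = card (set_mset M)"
  by (induction M) (simp_all add: multiplicity_free_add_mset_iff)

lemma inj_on_if_multiplicity_free_image_mset:
  "multiplicity_free (image_mset f M) \<Longrightarrow> inj_on f (set_mset M)"
proof (induction M)
  case (add a M)
  then have "inj_on f (set_mset M)" "f a \<notin> f ` set_mset M"
    by (simp_all add: multiplicity_free_add_mset_iff)
  then show ?case
    by auto
qed simp

lemma card_set_mset_le_size: "card (set_mset M) \<le> size M"
  by (induction M) (simp_all add: card_insert_if)

lemma prob_add_mset_collision_le:
  fixes \<pi> :: "'a \<Rightarrow> 'b"
  assumes mass: "\<And>D. finite D \<Longrightarrow> measure_pmf.prob p {x. P x \<and> \<pi> x \<in> D} \<le> real (card D) * \<mu>"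
    and free: "multiplicity_free (image_mset \<pi> (filter_mset P S))" and "0 \<le> \<mu>"
  shows "measure_pmf.prob p {x. \<not> multiplicity_free (image_mset \<pi> (filter_mset P (add_mset x S)))}
    \<le> real (size S) * \<mu>"
proof -
  let ?D = "set_mset (image_mset \<pi> (filter_mset P S))"
  have "measure_pmf.prob p {x. \<not> multiplicity_free (image_mset \<pi> (filter_mset P (add_mset x S)))}
      \<le> measure_pmf.prob p {x. P x \<and> \<pi> x \<in> ?D}"
    using free by (intro measure_pmf.finite_measure_mono) (auto simp: multiplicity_free_add_mset_iff)
  also have "\<dots> \<le> real (card ?D) * \<mu>"
    by (rule mass) simp
  also have "\<dots> \<le> real (size S) * \<mu>"
  proof -
    have "card ?D \<le> size (filter_mset P S)"
      using card_set_mset_le_size[of "image_mset \<pi> (filter_mset P S)"] by simp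
    also have "\<dots> \<le> size S"
      by (rule size_filter_mset_lesseq)
    finally show ?thesis
      using \<open>0 \<le> \<mu>\<close> by (intro mult_right_mono) simp_all
  qed
  finally show ?thesis .
qed

lemma prob_not_multiplicity_free_sample_pmf:
  fixes \<pi> :: "'a \<Rightarrow> 'b"
  assumes fin: "finite (set_pmf p)" and "0 \<le> \<mu>"
    and mass: "\<And>D. finite D \<Longrightarrow> measure_pmf.prob p {x. P x \<and> \<pi> x \<in> D} \<le> real (card D) * \<mu>"
  shows "measure_pmf.prob (sample_pmf m p) {S. \<not> multiplicity_free (image_mset \<pi> (filter_mset P S))}
    \<le> real m * real m * \<mu>"
proof (induction m)
  case 0
  then show ?case
    by (simp add: multiplicity_free_def)
next
  case (Suc m)
  define Bad where "Bad = {S. \<not> multiplicity_free (image_mset \<pi> (filter_mset P S))}"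
  let ?M = "sample_pmf m p"
  have step: "measure_pmf.prob (map_pmf (\<lambda>x. add_mset x S) p) Bad \<le> indicator Bad S + real m * \<mu>"
    if "S \<in> set_pmf ?M" for S
  proof (cases "S \<in> Bad")
    case False
    have "size S = m"
      using that set_pmf_sample_pmf by blast
    then show ?thesis
      using prob_add_mset_collision_le[OF mass _ \<open>0 \<le> \<mu>\<close>, of S] False
      by (simp add: Bad_def measure_map_pmf vimage_def)
  next
    case True
    then show ?thesis
      using measure_pmf.prob_le_1 \<open>0 \<le> \<mu>\<close> by (simp add: add_increasing2)
  qed
  have "measure_pmf.prob (sample_pmf (Suc m) p) Bad
      = (\<integral>S. measure_pmf.prob (map_pmf (\<lambda>x. add_mset x S) p) Bad \<partial>?M)"
    unfolding sample_pmf_Suc_right by (rule measure_pmf_prob_bind_pmf)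
  also have "\<dots> \<le> (\<integral>S. indicator Bad S + real m * \<mu> \<partial>?M)"
    using finite_set_pmf_sample_pmf[OF fin, of m] step
    by (intro integral_mono_AE AE_pmfI) (auto simp: integrable_measure_pmf_finite)
  also have "\<dots> = measure_pmf.prob ?M Bad + real m * \<mu>"
    using finite_set_pmf_sample_pmf[OF fin, of m] by (simp add: integrable_measure_pmf_finite)
  also have "\<dots> \<le> real (Suc m) * real (Suc m) * \<mu>"
    using Suc \<open>0 \<le> \<mu>\<close> by (simp add: Bad_def algebra_simps add_increasing)
  finally show ?case
    by (simp add: Bad_def)
qed

lemma tv_dist_le_if_one_sided:
  assumes "\<And>A. measure_pmf.prob P A - \<epsilon> \<le> measure_pmf.prob Q A"
  shows "tv_dist P Q \<le> \<epsilon>"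
  unfolding tv_dist_def
proof (rule cSUP_least)
  fix A
  have "measure_pmf.prob P (- A) = 1 - measure_pmf.prob P A"
    "measure_pmf.prob Q (- A) = 1 - measure_pmf.prob Q A"
    by (simp_all add: measure_pmf.prob_compl[symmetric] Compl_eq_Diff_UNIV)
  then show "\<bar>measure_pmf.prob P A - measure_pmf.prob Q A\<bar> \<le> \<epsilon>"
    using assms[of A] assms[of "- A"] by linarith
qed simp

lemma abs_prob_diff_le_tv_dist:
  "\<bar>measure_pmf.prob P A - measure_pmf.prob Q A\<bar> \<le> tv_dist P Q"
  unfolding tv_dist_def
proof (rule cSUP_upper)
  have "\<bar>measure_pmf.prob P B - measure_pmf.prob Q B\<bar> \<le> 1" for B
  proof -
    have "0 \<le> measure_pmf.prob P B" "0 \<le> measure_pmf.prob Q B"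
      "measure_pmf.prob P B \<le> 1" "measure_pmf.prob Q B \<le> 1"
      by simp_all
    then show ?thesis
      unfolding abs_le_iff by linarith
  qed
  then show "bdd_above (range (\<lambda>A. \<bar>measure_pmf.prob P A - measure_pmf.prob Q A\<bar>))"
    by (rule bdd_aboveI2)
qed simp

section \<open>Mixtures of relabelled samples\<close>

lemma prod_mset_image_mset_nonneg:
  fixes f :: "'a \<Rightarrow> 'b :: linordered_semidom"
  shows "(\<And>x. x \<in># M \<Longrightarrow> 0 \<le> f x) \<Longrightarrow> 0 \<le> prod_mset (image_mset f M)"
  by (induction M) auto

lemma integral_sample_pmf_relabel_ge:
  fixes f :: "'a multiset \<Rightarrow> real" and \<rho> :: "'a \<Rightarrow> 'a"
  assumes fin: "finite (set_pmf p)"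
    and w: "\<And>x. pmf (map_pmf \<rho> q) x = w x * pmf p x"
    and f_nonneg: "\<And>S. 0 \<le> f S" and f_le_1: "\<And>S. f S \<le> 1"
    and f_inv: "\<And>S. Good (image_mset \<rho> S) \<Longrightarrow> f (image_mset \<rho> S) = f S"
  shows "(\<integral>S. prod_mset (image_mset w S) * (indicator {S. Good S} S * f S) \<partial>sample_pmf m p)
    \<le> (\<integral>S. f S \<partial>sample_pmf m q)"
proof -
  have "(\<integral>S. prod_mset (image_mset w S) * (indicator {S. Good S} S * f S) \<partial>sample_pmf m p)
      = (\<integral>S. indicator {S. Good S} S * f S \<partial>sample_pmf m (map_pmf \<rho> q))"
    by (rule integral_sample_pmf_reweight[OF fin w, symmetric])
  also have "\<dots> = (\<integral>S. indicator {S. Good S} (image_mset \<rho> S) * f (image_mset \<rho> S) \<partial>sample_pmf m q)"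
    by (simp add: sample_pmf_map_pmf)
  also have "\<dots> \<le> (\<integral>S. f S \<partial>sample_pmf m q)"
  proof (rule integral_mono)
    show "integrable (sample_pmf m q) (\<lambda>S. indicator {S. Good S} (image_mset \<rho> S) * f (image_mset \<rho> S))"
      using f_nonneg f_le_1
      by (intro measure_pmf.integrable_const_bound[where B = 1]) (auto simp: indicator_def)
    show "integrable (sample_pmf m q) f"
      using f_nonneg f_le_1 by (intro measure_pmf.integrable_const_bound[where B = 1]) auto
    show "indicator {S. Good S} (image_mset \<rho> S) * f (image_mset \<rho> S) \<le> f S" for S
      using f_nonneg f_inv by (auto simp: indicator_def)
  qed
  finally show ?thesis .
qed

lemma integral_indicator_le_mean_reweighted:
  fixes g :: "'a multiset \<Rightarrow> real" and w :: "'c \<Rightarrow> 'a \<Rightarrow> real"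
  assumes fin: "finite (set_pmf p)" and C: "finite C" "C \<noteq> {}"
    and w_nonneg: "\<And>c x. c \<in> C \<Longrightarrow> 0 \<le> w c x" and g_nonneg: "\<And>S. 0 \<le> g S"
    and avg: "\<And>S. S \<in> set_pmf (sample_pmf m p) \<Longrightarrow> Typical S \<Longrightarrow>
      real (card C) \<le> (\<Sum>c\<in>C. prod_mset (image_mset (w c) S))"
  shows "(\<integral>S. indicator {S. Typical S} S * g S \<partial>sample_pmf m p)
    \<le> (\<Sum>c\<in>C. \<integral>S. prod_mset (image_mset (w c) S) * g S \<partial>sample_pmf m p) / real (card C)"
proof -
  let ?P = "sample_pmf m p"
  have int: "integrable ?P h" for h :: "_ \<Rightarrow> real"
    using finite_set_pmf_sample_pmf[OF fin] by (rule integrable_measure_pmf_finite)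
  have card_pos: "0 < real (card C)"
    using C by (simp add: card_gt_0_iff)
  have "(\<integral>S. indicator {S. Typical S} S * g S \<partial>?P)
      \<le> (\<integral>S. (\<Sum>c\<in>C. prod_mset (image_mset (w c) S)) * g S / real (card C) \<partial>?P)"
  proof (intro integral_mono_AE int AE_pmfI)
    fix S assume S: "S \<in> set_pmf ?P"
    have "real (card C) * (indicator {S. Typical S} S * g S)
        \<le> (\<Sum>c\<in>C. prod_mset (image_mset (w c) S)) * g S"
    proof (cases "Typical S")
      case True
      then show ?thesis
        using avg[OF S] g_nonneg by (simp add: mult_right_mono)
    next
      case False
      then show ?thesis
        using w_nonneg g_nonneg by (simp add: sum_nonneg prod_mset_image_mset_nonneg)
    qed
    then show "indicator {S. Typical S} S * g S
        \<le> (\<Sum>c\<in>C. prod_mset (image_mset (w c) S)) * g S / real (card C)"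
      using card_pos by (simp add: pos_le_divide_eq mult_ac)
  qed
  also have "\<dots> = (\<Sum>c\<in>C. \<integral>S. prod_mset (image_mset (w c) S) * g S \<partial>?P) / real (card C)"
    using int by (simp add: sum_distrib_right)
  finally show ?thesis .
qed

lemma tv_dist_bind_sample_pmf_mixture_le:
  fixes p :: "'a pmf" and q :: "'c \<Rightarrow> 'a pmf" and \<rho> :: "'c \<Rightarrow> 'a \<Rightarrow> 'a"
    and w :: "'c \<Rightarrow> 'a \<Rightarrow> real" and V :: "'a multiset \<Rightarrow> 'b pmf"
  assumes fin: "finite (set_pmf p)" and C: "finite C" "C \<noteq> {}"
    and w: "\<And>c x. c \<in> C \<Longrightarrow> pmf (map_pmf (\<rho> c) (q c)) x = w c x * pmf p x"
    and w_nonneg: "\<And>c x. c \<in> C \<Longrightarrow> 0 \<le> w c x"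
    and V_inv: "\<And>c S. c \<in> C \<Longrightarrow> Good (image_mset (\<rho> c) S) \<Longrightarrow> V (image_mset (\<rho> c) S) = V S"
    and avg: "\<And>S. S \<in> set_pmf (sample_pmf m p) \<Longrightarrow> Typical S \<Longrightarrow>
      real (card C) \<le> (\<Sum>c\<in>C. prod_mset (image_mset (w c) S))"
  shows "tv_dist (bind_pmf (sample_pmf m p) V)
      (bind_pmf (bind_pmf (pmf_of_set C) (\<lambda>c. sample_pmf m (q c))) V)
    \<le> measure_pmf.prob (sample_pmf m p) {S. \<not> Good S}
      + measure_pmf.prob (sample_pmf m p) {S. \<not> Typical S}"
proof (rule tv_dist_le_if_one_sided)
  fix A
  let ?P = "sample_pmf m p"
  define f where "f S = measure_pmf.prob (V S) A" for S
  define g where "g S = indicator {S. Good S} S * f S" for S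
  have f_bounds: "0 \<le> f S" "f S \<le> 1" for S
    by (simp_all add: f_def)
  have g_nonneg: "0 \<le> g S" for S
    by (simp add: g_def f_def)
  have int: "integrable ?P h" for h :: "_ \<Rightarrow> real"
    using finite_set_pmf_sample_pmf[OF fin] by (rule integrable_measure_pmf_finite)
  have card_pos: "0 < real (card C)"
    using C by (simp add: card_gt_0_iff)
  have "f S \<le> indicator {S. Typical S} S * g S + indicator {S. \<not> Good S} S
      + indicator {S. \<not> Typical S} S" for S
    using f_bounds[of S] by (auto simp: g_def indicator_def)
  then have "(\<integral>S. f S \<partial>?P) \<le> (\<integral>S. indicator {S. Typical S} S * g S
      + indicator {S. \<not> Good S} S + indicator {S. \<not> Typical S} S \<partial>?P)"
    using int by (intro integral_mono)
  then have "(\<integral>S. f S \<partial>?P) - measure_pmf.prob ?P {S. \<not> Good S} - measure_pmf.prob ?P {S. \<not> Typical S}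
      \<le> (\<integral>S. indicator {S. Typical S} S * g S \<partial>?P)"
    using int by simp
  also have "\<dots> \<le> (\<Sum>c\<in>C. \<integral>S. prod_mset (image_mset (w c) S) * g S \<partial>?P) / real (card C)"
    by (rule integral_indicator_le_mean_reweighted[OF fin C w_nonneg g_nonneg avg])
  also have "\<dots> \<le> (\<Sum>c\<in>C. \<integral>S. f S \<partial>sample_pmf m (q c)) / real (card C)"
  proof (intro divide_right_mono sum_mono)
    fix c assume c: "c \<in> C"
    have "f (image_mset (\<rho> c) S) = f S" if "Good (image_mset (\<rho> c) S)" for S
      using V_inv[OF c that] by (simp add: f_def)
    then show "(\<integral>S. prod_mset (image_mset (w c) S) * g S \<partial>?P) \<le> (\<integral>S. f S \<partial>sample_pmf m (q c))"
      unfolding g_def by (rule integral_sample_pmf_relabel_ge[OF fin w[OF c] f_bounds])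
  qed (use card_pos in simp)
  also have "\<dots> = (\<integral>c. measure_pmf.prob (bind_pmf (sample_pmf m (q c)) V) A \<partial>pmf_of_set C)"
    using C by (simp add: integral_pmf_of_set measure_pmf_prob_bind_pmf f_def)
  also have "\<dots> = measure_pmf.prob (bind_pmf (bind_pmf (pmf_of_set C) (\<lambda>c. sample_pmf m (q c))) V) A"
    unfolding bind_assoc_pmf by (rule measure_pmf_prob_bind_pmf[symmetric])
  finally show "measure_pmf.prob (bind_pmf ?P V) A
      - (measure_pmf.prob ?P {S. \<not> Good S} + measure_pmf.prob ?P {S. \<not> Typical S})
    \<le> measure_pmf.prob (bind_pmf (bind_pmf (pmf_of_set C) (\<lambda>c. sample_pmf m (q c))) V) A"
    by (simp add: measure_pmf_prob_bind_pmf f_def)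
qed

definition pijk_density :: "(nat \<Rightarrow> nat set) \<Rightarrow> nat \<Rightarrow> nat \<Rightarrow> nat \<Rightarrow> nat \<times> nat \<Rightarrow> real" where
  "pijk_density B i j k x =
      (1 - 1 / real j) * (if x = (0, 0) then 1 else 0)
    + (1 / real j - 1 / real k) * (indicator (B i \<times> {2 * j + 1}) x / real (card (B i)))
    + (1 / real k) * (if x = (i, 2 * j + 2) then 1 else 0)"

definition pijk_support :: "(nat \<Rightarrow> nat set) \<Rightarrow> nat \<Rightarrow> nat \<Rightarrow> (nat \<times> nat) set" where
  "pijk_support B i j = insert (0, 0) (insert (i, 2 * j + 2) (B i \<times> {2 * j + 1}))"

lemma pijk_density_nonneg:
  assumes "1 \<le> j" "j \<le> k"
  shows "0 \<le> pijk_density B i j k x"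
proof -
  have "0 \<le> 1 - 1 / real j" "0 \<le> 1 / real j - 1 / real k"
    using assms by (simp_all add: frac_le)
  then show ?thesis
    unfolding pijk_density_def by (intro add_nonneg_nonneg mult_nonneg_nonneg) auto
qed

lemma pijk_density_eq_0: "x \<notin> pijk_support B i j \<Longrightarrow> pijk_density B i j k x = 0"
  by (auto simp: pijk_density_def pijk_support_def indicator_def)

lemma pijk_density_odd:
  "snd x = 2 * j + 1 \<Longrightarrow>
    pijk_density B i j k x = (1 / real j - 1 / real k) * (indicator (B i) (fst x) / real (card (B i)))"
  by (cases x) (auto simp: pijk_density_def indicator_def)

lemma pijk_density_not_odd:
  "snd x \<noteq> 2 * j + 1 \<Longrightarrow>
    pijk_density B i j k x = (1 - 1 / real j) * (if x = (0, 0) then 1 else 0)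
      + (1 / real k) * (if x = (i, 2 * j + 2) then 1 else 0)"
  by (cases x) (auto simp: pijk_density_def indicator_def)

lemma sum_pijk_density:
  assumes "finite (B i)" "B i \<noteq> {}"
  shows "(\<Sum>x\<in>pijk_support B i j. pijk_density B i j k x) = 1"
proof -
  let ?X = "pijk_support B i j" and ?O = "B i \<times> {2 * j + 1}"
  have finX: "finite ?X"
    using assms(1) by (simp add: pijk_support_def)
  have "(\<Sum>x\<in>?X. indicator ?O x :: real) = real (card (?X \<inter> ?O))"
    using finX by (simp add: indicator_def sum.If_cases Int_def)
  also have "?X \<inter> ?O = ?O"
    by (auto simp: pijk_support_def)
  finally have odd_mass: "(\<Sum>x\<in>?X. indicator ?O x / real (card (B i))) = 1"
    using assms by (simp add: sum_divide_distrib[symmetric] card_cartesian_product)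
  have "(\<Sum>x\<in>?X. if x = (0, 0) then 1 else 0 :: real) = 1"
    "(\<Sum>x\<in>?X. if x = (i, 2 * j + 2) then 1 else 0 :: real) = 1"
    using finX by (simp_all add: pijk_support_def)
  then show ?thesis
    unfolding pijk_density_def sum.distrib sum_distrib_left[symmetric] odd_mass by simp
qed

lemma pmf_pijk:
  assumes "finite (B i)" "B i \<noteq> {}" "1 \<le> j" "j \<le> k"
  shows "pmf (pijk B i j k) x = pijk_density B i j k x"
proof -
  have "(\<integral>\<^sup>+x. ennreal (pijk_density B i j k x) \<partial>count_space UNIV)
      = (\<Sum>x\<in>pijk_support B i j. ennreal (pijk_density B i j k x))"
    using assms(1) by (intro nn_integral_count_space') (auto simp: pijk_support_def pijk_density_eq_0)
  also have "\<dots> = 1"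
    using sum_pijk_density[of B i j k, OF assms(1,2)] pijk_density_nonneg[OF assms(3,4)]
    by (simp add: sum_ennreal)
  moreover have "pijk B i j k = embed_pmf (pijk_density B i j k)"
    by (simp only: pijk_def pijk_density_def[abs_def])
  ultimately show ?thesis
    using pmf_embed_pmf[of "pijk_density B i j k"] pijk_density_nonneg[OF assms(3,4)] by simp
qed

lemma pijk_in_Cg:
  "1 \<le> j \<Longrightarrow> j \<le> g j \<Longrightarrow> B i \<noteq> {} \<Longrightarrow> pijk B i j (g j) \<in> Cg B g"
  unfolding Cg_def valid_param_def by blast

section \<open>A family of codes\<close>

lemma card_pair_selection:
  fixes c :: "nat \<Rightarrow> bool"
  shows "card {l. l < 2 * n \<and> c (l div 2) = odd l} = n"
proof -
  let ?sel = "\<lambda>d. 2 * d + (if c d then 1 else 0 :: nat)"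
  have "{l. l < 2 * n \<and> c (l div 2) = odd l} = ?sel ` {..<n}"
  proof (intro set_eqI iffI)
    fix l assume "l \<in> {l. l < 2 * n \<and> c (l div 2) = odd l}"
    then have "l = ?sel (l div 2)" "l div 2 < n"
      by (auto elim: oddE)
    then show "l \<in> ?sel ` {..<n}"
      by blast
  qed (auto split: if_splits)
  moreover have "inj_on ?sel {..<n}"
  proof (rule inj_onI)
    fix a b assume "?sel a = ?sel b"
    then have "?sel a div 2 = ?sel b div 2"
      by simp
    then show "a = b"
      by simp
  qed
  ultimately show ?thesis
    by (simp add: card_image)
qed

lemma card_bool_functions_prescribed:
  fixes \<pi> :: "'a \<Rightarrow> 'i" and v :: "'a \<Rightarrow> bool"
  assumes "finite I" "inj_on \<pi> Y" "\<pi> ` Y \<subseteq> I"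
  shows "card {c \<in> PiE I (\<lambda>_. UNIV). \<forall>y\<in>Y. c (\<pi> y) = v y} = 2 ^ (card I - card Y)"
proof -
  define F where "F d = (if d \<in> \<pi> ` Y then {v (inv_into Y \<pi> d)} else UNIV)" for d
  have "{c \<in> PiE I (\<lambda>_. UNIV). \<forall>y\<in>Y. c (\<pi> y) = v y} = PiE I F"
  proof (intro set_eqI)
    fix c
    have "(\<forall>y\<in>Y. c (\<pi> y) = v y) \<longleftrightarrow> (\<forall>d\<in>I. c d \<in> F d)"
      using assms(2,3) by (auto simp: F_def inv_into_f_f)
    then show "c \<in> {c \<in> PiE I (\<lambda>_. UNIV). \<forall>y\<in>Y. c (\<pi> y) = v y} \<longleftrightarrow> c \<in> PiE I F"
      by (simp add: PiE_iff conj_commute)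
  qed
  moreover have "card (PiE I F) = (\<Prod>d\<in>I. if d \<in> \<pi> ` Y then 1 else 2)"
    by (auto simp: card_PiE assms(1) F_def card_UNIV_bool intro!: prod.cong)
  moreover have "(\<Prod>d\<in>I. if d \<in> \<pi> ` Y then 1 else 2 :: nat) = 2 ^ card (I - \<pi> ` Y)"
    using assms(1) by (simp add: prod.If_cases Diff_eq)
  moreover have "card (I - \<pi> ` Y) = card I - card Y"
    using assms by (simp add: card_Diff_subset finite_subset card_image)
  ultimately show ?thesis
    by simp
qed

lemma prod_mset_image_mset_filter_mset:
  "(\<And>x. \<not> P x \<Longrightarrow> w x = 1) \<Longrightarrow> prod_mset (image_mset w S) = prod_mset (image_mset w (filter_mset P S))"
  by (induction S) auto

lemma prod_mset_image_mset_if_zero: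
  fixes a :: "'b :: comm_semiring_1"
  shows "prod_mset (image_mset (\<lambda>x. if P x then a else 0) M) = (if \<forall>x\<in>#M. P x then a ^ size M else 0)"
  by (induction M) auto

locale pair_code_family =
  fixes B :: "nat \<Rightarrow> nat set" and j k n :: nat
  assumes enum: "range B = {A. finite A}"
    and j_pos: "1 \<le> j" and j_le_k: "j \<le> k" and n_pos: "0 < n"
begin

definition code_set :: "(nat \<Rightarrow> bool) \<Rightarrow> nat set" where
  "code_set c = {l. l < 2 * n \<and> c (l div 2) = odd l}"

definition codes :: "(nat \<Rightarrow> bool) set" where
  "codes = PiE {..<n} (\<lambda>_. UNIV)"

definition base_index :: nat where
  "base_index = inv B {..<2 * n}"

definition code_index :: "(nat \<Rightarrow> bool) \<Rightarrow> nat" where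
  "code_index c = inv B (code_set c)"

definition p_ref :: "(nat \<times> nat) pmf" where
  "p_ref = pijk B base_index j k"

definition q_code :: "(nat \<Rightarrow> bool) \<Rightarrow> (nat \<times> nat) pmf" where
  "q_code c = pijk B (code_index c) j k"

lemma B_inv: "finite A \<Longrightarrow> B (inv B A) = A"
  using enum by (intro f_inv_into_f) auto

lemma B_base_index: "B base_index = {..<2 * n}"
  by (simp add: base_index_def B_inv)

lemma code_set_subset: "code_set c \<subseteq> {..<2 * n}"
  by (auto simp: code_set_def)

lemma card_code_set: "card (code_set c) = n"
  unfolding code_set_def by (rule card_pair_selection)

lemma finite_code_set: "finite (code_set c)"
  using code_set_subset finite_subset by blast

lemma B_code_index: "B (code_index c) = code_set c"
  by (simp add: code_index_def B_inv finite_code_set)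

lemma code_index_neq_base_index: "code_index c \<noteq> base_index"
proof
  assume "code_index c = base_index"
  then have "code_set c = {..<2 * n}"
    using B_code_index B_base_index by metis
  then show False
    using card_code_set[of c] n_pos by simp
qed

lemma finite_codes: "finite codes"
  and codes_nonempty: "codes \<noteq> {}"
  and card_codes: "card codes = 2 ^ n"
  by (simp_all add: codes_def finite_PiE PiE_eq_empty_iff card_PiE card_UNIV_bool)

lemma pmf_p_ref: "pmf p_ref x = pijk_density B base_index j k x"
  unfolding p_ref_def using n_pos j_pos j_le_k by (intro pmf_pijk) (auto simp: B_base_index lessThan_empty_iff)

lemma code_set_nonempty: "code_set c \<noteq> {}"
  using card_code_set[of c] n_pos by auto

lemma pmf_q_code: "pmf (q_code c) x = pijk_density B (code_index c) j k x"
  unfolding q_code_def using j_pos j_le_k finite_code_set code_set_nonempty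
  by (intro pmf_pijk) (auto simp: B_code_index)

lemma set_pmf_p_ref: "set_pmf p_ref \<subseteq> pijk_support B base_index j"
proof
  fix x assume "x \<in> set_pmf p_ref"
  then show "x \<in> pijk_support B base_index j"
    using pijk_density_eq_0[of x B base_index j k] by (auto simp: set_pmf_eq pmf_p_ref)
qed

lemma finite_pijk_support_base: "finite (pijk_support B base_index j)"
  by (simp add: pijk_support_def B_base_index)

lemma finite_set_pmf_p_ref: "finite (set_pmf p_ref)"
  by (rule finite_subset[OF set_pmf_p_ref finite_pijk_support_base])

lemma pmf_p_ref_odd:
  "snd x = 2 * j + 1 \<Longrightarrow>
    pmf p_ref x = (1 / real j - 1 / real k) * (indicator {..<2 * n} (fst x) / (2 * real n))"
  by (simp add: pmf_p_ref pijk_density_odd B_base_index)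

lemma tv_dist_p_ref_q_code: "(1 / real j - 1 / real k) / 2 \<le> tv_dist p_ref (q_code c)"
proof -
  define A where "A = ({..<2 * n} - code_set c) \<times> {2 * j + 1}"
  have finA: "finite A"
    by (simp add: A_def)
  have "card A = n"
    using code_set_subset[of c] card_code_set[of c]
    by (simp add: A_def card_cartesian_product card_Diff_subset finite_subset)
  have "measure_pmf.prob p_ref A = (\<Sum>x\<in>A. (1 / real j - 1 / real k) / (2 * real n))"
    unfolding measure_measure_pmf_finite[OF finA]
    by (rule sum.cong) (auto simp: A_def pmf_p_ref_odd)
  also have "\<dots> = (1 / real j - 1 / real k) / 2"
    using \<open>card A = n\<close> n_pos by simp
  finally have "measure_pmf.prob p_ref A = (1 / real j - 1 / real k) / 2" .
  moreover have "measure_pmf.prob (q_code c) A = 0"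
    unfolding measure_measure_pmf_finite[OF finA]
    by (rule sum.neutral) (auto simp: A_def pmf_q_code pijk_density_odd B_code_index)
  ultimately show ?thesis
    using abs_prob_diff_le_tv_dist[of p_ref A "q_code c"] by simp
qed

definition swap_index_point :: "(nat \<Rightarrow> bool) \<Rightarrow> nat \<times> nat \<Rightarrow> nat \<times> nat" where
  "swap_index_point c = id((base_index, 2 * j + 2) := (code_index c, 2 * j + 2),
                          (code_index c, 2 * j + 2) := (base_index, 2 * j + 2))"

definition likelihood_ratio :: "(nat \<Rightarrow> bool) \<Rightarrow> nat \<times> nat \<Rightarrow> real" where
  "likelihood_ratio c x = (if snd x = 2 * j + 1 then if fst x \<in> code_set c then 2 else 0 else 1)"

lemma swap_index_point_swap_index_point: "swap_index_point c (swap_index_point c x) = x"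
  using code_index_neq_base_index[of c] by (auto simp: swap_index_point_def)

lemma snd_swap_index_point: "snd (swap_index_point c x) = snd x"
  by (simp add: swap_index_point_def)

lemma swap_index_point_eq_self: "snd x \<noteq> 2 * j + 2 \<Longrightarrow> swap_index_point c x = x"
  by (auto simp: swap_index_point_def)

lemma pmf_map_swap_index_point_q_code:
  "pmf (map_pmf (swap_index_point c) (q_code c)) x = likelihood_ratio c x * pmf p_ref x"
proof -
  have "inj (swap_index_point c)"
    by (metis injI swap_index_point_swap_index_point)
  then have "pmf (map_pmf (swap_index_point c) (q_code c)) x = pmf (q_code c) (swap_index_point c x)"
    by (metis pmf_map_inj' swap_index_point_swap_index_point)
  also have "\<dots> = likelihood_ratio c x * pmf p_ref x"
  proof (cases "snd x = 2 * j + 1")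
    case True
    then show ?thesis
      using code_set_subset[of c] n_pos
      by (auto simp: swap_index_point_eq_self pmf_q_code pmf_p_ref pijk_density_odd B_code_index
          B_base_index card_code_set likelihood_ratio_def)
  next
    case False
    then show ?thesis
      using code_index_neq_base_index[of c]
      by (auto simp: pmf_q_code pmf_p_ref pijk_density_not_odd snd_swap_index_point
          likelihood_ratio_def swap_index_point_def)
  qed
  finally show ?thesis .
qed

lemma is_ind_swap_index_point: "is_ind (swap_index_point c x) = is_ind x"
  by (simp add: is_ind_def snd_swap_index_point)

lemma size_ind_image_swap_index_point:
  "size (ind (image_mset (swap_index_point c) S)) = size (ind S)"
  by (simp add: ind_def filter_mset_image_mset is_ind_swap_index_point)

lemma filter_mset_image_swap_index_point:
  assumes "\<And>x. P x \<Longrightarrow> snd x \<noteq> 2 * j + 2"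
  shows "filter_mset P (image_mset (swap_index_point c) S) = filter_mset P S"
proof -
  have "P (swap_index_point c x) = P x" for x
    using assms by (metis swap_index_point_eq_self swap_index_point_swap_index_point)
  then have "filter_mset P (image_mset (swap_index_point c) S)
      = image_mset (swap_index_point c) (filter_mset P S)"
    by (simp add: filter_mset_image_mset)
  also have "\<dots> = filter_mset P S"
    using assms by (induction S) (auto simp: swap_index_point_eq_self)
  finally show ?thesis .
qed

lemma noind_image_swap_index_point: "noind (image_mset (swap_index_point c) S) = noind S"
proof -
  have "filter_mset is_const (image_mset (swap_index_point c) S) = filter_mset is_const S"
    by (rule filter_mset_image_swap_index_point) (simp add: is_const_def)
  moreover have "filter_mset is_odd (image_mset (swap_index_point c) S) = filter_mset is_odd S"
    by (rule filter_mset_image_swap_index_point) (auto simp: is_odd_def)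
  ultimately show ?thesis
    by (simp add: noind_def)
qed

lemma Vsub_image_swap_index_point:
  assumes "real (size (ind S)) \<le> \<eta> * real (size S)"
  shows "Vsub \<eta> (image_mset (swap_index_point c) S) = Vsub \<eta> S"
  using assms
  by (simp add: Vsub_def Let_def size_ind_image_swap_index_point noind_image_swap_index_point)

abbreviation odd_points :: "(nat \<times> nat) multiset \<Rightarrow> (nat \<times> nat) multiset" where
  "odd_points S \<equiv> filter_mset (\<lambda>x. snd x = 2 * j + 1) S"

abbreviation pair_of :: "nat \<times> nat \<Rightarrow> nat" where
  "pair_of x \<equiv> fst x div 2"

lemma fst_less_if_odd_point:
  assumes "set_mset S \<subseteq> pijk_support B base_index j" "x \<in># odd_points S"
  shows "fst x < 2 * n"
  using assms by (auto simp: pijk_support_def B_base_index)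

lemma prod_likelihood_ratio:
  assumes "set_mset S \<subseteq> pijk_support B base_index j"
  shows "prod_mset (image_mset (likelihood_ratio c) S)
    = (if \<forall>x\<in>#odd_points S. c (pair_of x) = odd (fst x) then 2 ^ size (odd_points S) else 0)"
proof -
  have "prod_mset (image_mset (likelihood_ratio c) S)
      = prod_mset (image_mset (likelihood_ratio c) (odd_points S))"
    by (rule prod_mset_image_mset_filter_mset) (simp add: likelihood_ratio_def)
  also have "image_mset (likelihood_ratio c) (odd_points S)
      = image_mset (\<lambda>x. if c (pair_of x) = odd (fst x) then 2 else 0) (odd_points S)"
    using fst_less_if_odd_point[OF assms]
    by (intro image_mset_cong) (auto simp: likelihood_ratio_def code_set_def)
  finally show ?thesis
    by (simp add: prod_mset_image_mset_if_zero)
qed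

text \<open>The pair selections \<open>code_set c\<close> of a uniform code are independent across pairs, so
  on samples hitting distinct pairs the likelihood ratios average to exactly one.\<close>
lemma sum_prod_likelihood_ratio:
  assumes supp: "set_mset S \<subseteq> pijk_support B base_index j"
    and free: "multiplicity_free (image_mset pair_of (odd_points S))"
  shows "(\<Sum>c\<in>codes. prod_mset (image_mset (likelihood_ratio c) S)) = real (card codes)"
proof -
  define Y where "Y = set_mset (odd_points S)"
  have inj: "inj_on pair_of Y"
    unfolding Y_def by (rule inj_on_if_multiplicity_free_image_mset[OF free])
  have "size (odd_points S) = card (pair_of ` Y)"
    using size_eq_card_set_mset_if_multiplicity_free[OF free] by (simp add: Y_def)
  then have size_odd: "size (odd_points S) = card Y"
    using inj by (simp add: card_image)
  have pairs: "pair_of ` Y \<subseteq> {..<n}"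
    using fst_less_if_odd_point[OF supp] by (auto simp: Y_def div_less_iff_less_mult mult.commute)
  then have "card Y \<le> n"
    using card_inj_on_le[OF inj pairs] by simp
  have "(\<Sum>c\<in>codes. prod_mset (image_mset (likelihood_ratio c) S))
      = (\<Sum>c\<in>codes. if \<forall>y\<in>Y. c (pair_of y) = odd (fst y) then 2 ^ size (odd_points S) else 0)"
    by (simp add: prod_likelihood_ratio[OF supp] Y_def)
  also have "\<dots> = real (card {c \<in> codes. \<forall>y\<in>Y. c (pair_of y) = odd (fst y)}) * 2 ^ card Y"
    using finite_codes size_odd by (simp add: sum.If_cases Int_def conj_commute)
  also have "card {c \<in> codes. \<forall>y\<in>Y. c (pair_of y) = odd (fst y)} = 2 ^ (n - card Y)"
    unfolding codes_def using inj pairs by (subst card_bool_functions_prescribed) simp_all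
  also have "real (2 ^ (n - card Y)) * 2 ^ card Y = real (card codes)"
    using \<open>card Y \<le> n\<close> by (simp add: card_codes power_add[symmetric])
  finally show ?thesis .
qed

lemma prob_p_ref_is_ind: "measure_pmf.prob p_ref {x. is_ind x} = 1 / real k"
proof -
  have "pijk_support B base_index j \<inter> {x. is_ind x} = {(base_index, 2 * j + 2)}"
    by (auto simp: pijk_support_def is_ind_def)
  then show ?thesis
    using measure_pmf_eq_sum_Int[OF finite_pijk_support_base set_pmf_p_ref, of "{x. is_ind x}"]
    by (simp add: pmf_p_ref pijk_density_not_odd)
qed

lemma prob_sample_p_ref_many_ind:
  assumes "0 < \<eta>" "0 < m"
  shows "measure_pmf.prob (sample_pmf m p_ref) {S. \<not> real (size (ind S)) \<le> \<eta> * real (size S)}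
    \<le> 1 / (\<eta> * real k)"
proof -
  let ?P = "sample_pmf m p_ref"
  have "measure_pmf.prob ?P {S. \<not> real (size (ind S)) \<le> \<eta> * real (size S)}
      = measure_pmf.prob ?P ({S. \<not> real (size (ind S)) \<le> \<eta> * real (size S)} \<inter> set_pmf ?P)"
    by (simp add: measure_Int_set_pmf)
  also have "\<dots> \<le> measure_pmf.prob ?P {S. \<eta> * real m \<le> real (size (filter_mset is_ind S))}"
    using set_pmf_sample_pmf[of m p_ref]
    by (intro measure_pmf.finite_measure_mono) (auto simp: ind_def)
  also have "\<dots> \<le> real m * (1 / real k) / (\<eta> * real m)"
    using prob_size_filter_mset_sample_pmf_ge[OF finite_set_pmf_p_ref, of "\<eta> * real m" m is_ind] assms
    by (simp add: prob_p_ref_is_ind)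
  also have "\<dots> = 1 / (\<eta> * real k)"
    using assms by simp
  finally show ?thesis .
qed

lemma prob_p_ref_pairs:
  assumes "finite D"
  shows "measure_pmf.prob p_ref {x. snd x = 2 * j + 1 \<and> pair_of x \<in> D} \<le> real (card D) * (1 / real n)"
proof -
  let ?X = "pijk_support B base_index j" and ?E = "{x. snd x = 2 * j + 1 \<and> pair_of x \<in> D}"
  have "?X \<inter> ?E \<subseteq> (\<lambda>(d, e). (2 * d + e, 2 * j + 1)) ` (D \<times> {0, 1})"
  proof
    fix x assume "x \<in> ?X \<inter> ?E"
    then show "x \<in> (\<lambda>(d, e). (2 * d + e, 2 * j + 1)) ` (D \<times> {0, 1})"
      by (intro image_eqI[where x = "(fst x div 2, fst x mod 2)"]) (auto simp: prod_eq_iff)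
  qed
  then have "card (?X \<inter> ?E) \<le> card (D \<times> {0, 1 :: nat})"
    using assms by (meson card_image_le card_mono finite_SigmaI finite.intros order_trans finite_imageI)
  then have card_le: "card (?X \<inter> ?E) \<le> 2 * card D"
    by (simp add: card_cartesian_product)
  have "1 / real j \<le> 1" "0 \<le> 1 / real k"
    using j_pos by simp_all
  then have "1 / real j - 1 / real k \<le> 1"
    by linarith
  then have "pmf p_ref x \<le> 1 / (2 * real n)" if "x \<in> ?X \<inter> ?E" for x
    using that mult_right_mono[of "1 / real j - 1 / real k" 1 "1 / (2 * real n)"]
    by (simp add: pmf_p_ref_odd indicator_def)
  then have "measure_pmf.prob p_ref ?E \<le> real (card (?X \<inter> ?E)) * (1 / (2 * real n))"
    unfolding measure_pmf_eq_sum_Int[OF finite_pijk_support_base set_pmf_p_ref]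
    by (rule sum_bounded_above)
  also have "\<dots> \<le> real (card D) * (1 / real n)"
  proof -
    have "real (card (?X \<inter> ?E)) \<le> 2 * real (card D)"
      using of_nat_mono[OF card_le] by simp
    then show ?thesis
      using n_pos by (simp add: field_simps)
  qed
  finally show ?thesis .
qed

theorem tv_dist_Vsub_sample_mixture:
  assumes "0 < \<eta>" "0 < m"
  shows "tv_dist (adv_apply (Vsub \<eta>) (sample_pmf m p_ref))
      (adv_apply (Vsub \<eta>) (mix_sample_pmf m (map_pmf q_code (pmf_of_set codes))))
    \<le> 1 / (\<eta> * real k) + real m * real m / real n"
proof -
  let ?Good = "\<lambda>S. real (size (ind S)) \<le> \<eta> * real (size S)"
  let ?Typical = "\<lambda>S. multiplicity_free (image_mset pair_of (odd_points S))"
  have "tv_dist (adv_apply (Vsub \<eta>) (sample_pmf m p_ref))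
      (adv_apply (Vsub \<eta>) (mix_sample_pmf m (map_pmf q_code (pmf_of_set codes))))
    \<le> measure_pmf.prob (sample_pmf m p_ref) {S. \<not> ?Good S}
      + measure_pmf.prob (sample_pmf m p_ref) {S. \<not> ?Typical S}"
    unfolding adv_apply_def mix_sample_pmf_def bind_map_pmf
  proof (rule tv_dist_bind_sample_pmf_mixture_le[where \<rho> = swap_index_point and w = likelihood_ratio])
    show "Vsub \<eta> (image_mset (swap_index_point c) S) = Vsub \<eta> S"
      if "?Good (image_mset (swap_index_point c) S)" for c S
      using that by (simp add: Vsub_image_swap_index_point size_ind_image_swap_index_point)
    show "real (card codes) \<le> (\<Sum>c\<in>codes. prod_mset (image_mset (likelihood_ratio c) S))"
      if "S \<in> set_pmf (sample_pmf m p_ref)" "?Typical S" for S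
    proof -
      have "set_mset S \<subseteq> pijk_support B base_index j"
        using that(1) set_pmf_sample_pmf[of m p_ref] set_pmf_p_ref by blast
      then show ?thesis
        using sum_prod_likelihood_ratio that(2) by simp
    qed
  qed (auto simp: finite_set_pmf_p_ref finite_codes codes_nonempty
      pmf_map_swap_index_point_q_code likelihood_ratio_def)
  also have "\<dots> \<le> 1 / (\<eta> * real k) + real m * real m / real n"
  proof -
    have "measure_pmf.prob (sample_pmf m p_ref) {S. \<not> ?Typical S} \<le> real m * real m * (1 / real n)"
      by (rule prob_not_multiplicity_free_sample_pmf[OF finite_set_pmf_p_ref _ prob_p_ref_pairs]) simp
    then show ?thesis
      using prob_sample_p_ref_many_ind[OF assms] by simp
  qed
  finally show ?thesis .
qed

end

section \<open>Choice of parameters\<close>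

lemma superlinear_exceeds:
  assumes "superlinear g"
  obtains j where "1 \<le> j" "C * real j \<le> real (g j)"
proof -
  have "eventually (\<lambda>j. C \<le> real (g j) / real j) sequentially"
    using assms unfolding superlinear_def filterlim_at_top by blast
  then obtain N where N: "\<And>j. j \<ge> N \<Longrightarrow> C \<le> real (g j) / real j"
    by (auto simp: eventually_sequentially)
  show ?thesis
  proof
    show "1 \<le> Suc N"
      by simp
    show "C * real (Suc N) \<le> real (g (Suc N))"
      using N[of "Suc N"] by (simp add: pos_le_divide_eq del: of_nat_Suc)
  qed
qed

lemma linear_le_if_scaled_le:
  fixes \<alpha> :: real
  assumes "1 \<le> \<alpha>" "c * \<alpha> * real j \<le> real k" "0 \<le> c"
  shows "c * real j \<le> real k"
proof -
  have "c * real j * 1 \<le> c * real j * \<alpha>"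
    using assms(1,3) by (intro mult_left_mono) auto
  then show ?thesis
    using assms(2) by (simp add: mult_ac)
qed

lemma separation_margin:
  fixes \<alpha> :: real
  assumes "1 \<le> \<alpha>" "1 \<le> j" "256 * \<alpha> * real j \<le> real k"
  shows "4 * \<alpha> * (16 / real k) + 4 * (1 / (32 * real j)) \<le> (1 / real j - 1 / real k) / 2"
proof -
  have jk: "256 * real j \<le> real k"
    using linear_le_if_scaled_le[OF assms(1,3)] by simp
  then have pos: "0 < real j" "0 < real k"
    using assms(2) by simp_all
  have key: "x + z / 8 \<le> (z - y) / 2" if "x \<le> z / 4" "y \<le> z / 256" "0 \<le> z" for x y z :: real
    using that by (simp add: field_simps)
  have "4 * \<alpha> * (16 / real k) + 4 * (1 / (32 * real j)) = 4 * \<alpha> * (16 / real k) + (1 / real j) / 8"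
    by simp
  also have "\<dots> \<le> (1 / real j - 1 / real k) / 2"
  proof (rule key)
    show "4 * \<alpha> * (16 / real k) \<le> (1 / real j) / 4"
      using assms(3) pos by (simp add: field_simps)
    show "1 / real k \<le> (1 / real j) / 256"
      using jk pos by (simp add: field_simps)
  qed simp
  finally show ?thesis .
qed

lemma exists_separated_indistinguishable_mixture:
  fixes \<alpha> :: real and g :: "nat \<Rightarrow> nat"
  assumes enum: "range B = {A. finite A}" and "1 \<le> \<alpha>"
    and j: "1 \<le> j" "256 * \<alpha> * real j \<le> real (g j)" and "1 \<le> m"
  defines "\<eta> \<equiv> 16 / real (g j)"
  shows "\<exists>p \<in> Cg B g. \<exists>Q. set_pmf Q \<subseteq> Cg B g \<and>
      (\<forall>q \<in> set_pmf Q. tv_dist p q \<ge> 4 * \<alpha> * budget_sub \<eta> + 4 * (1 / (32 * real j))) \<and>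
      tv_dist (adv_apply (Vsub \<eta>) (sample_pmf m p)) (adv_apply (Vsub \<eta>) (mix_sample_pmf m Q)) \<le> 1 / 8"
proof -
  define k where "k = g j"
  have "256 * real j \<le> real k"
    using linear_le_if_scaled_le[OF \<open>1 \<le> \<alpha>\<close>] j(2) by (simp add: k_def)
  then have "j \<le> k" "16 < real k"
    using j(1) by linarith+
  interpret F: pair_code_family B j k "16 * m * m"
    using enum j(1) \<open>j \<le> k\<close> \<open>1 \<le> m\<close> by unfold_locales simp_all
  let ?Q = "map_pmf F.q_code (pmf_of_set F.codes)"
  have in_Cg: "pijk B i j k \<in> Cg B g" if "B i \<noteq> {}" for i
    using pijk_in_Cg[of j g B i] j(1) \<open>j \<le> k\<close> that by (simp add: k_def)
  have margin: "4 * \<alpha> * budget_sub \<eta> + 4 * (1 / (32 * real j)) \<le> (1 / real j - 1 / real k) / 2"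
    using separation_margin[OF \<open>1 \<le> \<alpha>\<close> j] by (simp add: budget_sub_def \<eta>_def k_def)
  have "F.p_ref \<in> Cg B g" "set_pmf ?Q \<subseteq> Cg B g"
    using F.finite_codes F.codes_nonempty F.code_set_nonempty \<open>1 \<le> m\<close>
    by (auto simp: F.p_ref_def F.q_code_def F.B_base_index F.B_code_index lessThan_empty_iff
        intro!: in_Cg)
  moreover have "\<forall>q \<in> set_pmf ?Q. 4 * \<alpha> * budget_sub \<eta> + 4 * (1 / (32 * real j)) \<le> tv_dist F.p_ref q"
    using order_trans[OF margin F.tv_dist_p_ref_q_code] F.finite_codes F.codes_nonempty by auto
  moreover have "tv_dist (adv_apply (Vsub \<eta>) (sample_pmf m F.p_ref))
      (adv_apply (Vsub \<eta>) (mix_sample_pmf m ?Q)) \<le> 1 / 8"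
    using F.tv_dist_Vsub_sample_mixture[of \<eta> m] \<open>1 \<le> m\<close> \<open>16 < real k\<close>
    by (simp add: \<eta>_def k_def)
  ultimately show ?thesis
    by blast
qed

theorem lemma5p5:
  fixes B :: "nat \<Rightarrow> nat set" and g :: "nat \<Rightarrow> nat"
  assumes enum: "range B = {A. finite A}"
    and sl: "superlinear g"
  shows "\<forall>\<alpha>::real. \<alpha> \<ge> 1 \<longrightarrow> (\<exists>\<eta> \<gamma>'::real. 0 < \<eta> \<and> \<eta> < 1 \<and> 0 < \<gamma>' \<and> \<gamma>' < 1 \<and>
     (\<forall>m::nat. m \<ge> 1 \<longrightarrow> (\<exists>p \<in> Cg B g. \<exists>Q :: (nat \<times> nat) pmf pmf. set_pmf Q \<subseteq> Cg B g \<and>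
        (\<forall>q \<in> set_pmf Q. tv_dist p q \<ge> 4 * \<alpha> * budget_sub \<eta> + 4 * \<gamma>') \<and>
        tv_dist (adv_apply (Vsub \<eta>) (sample_pmf m p))
                (adv_apply (Vsub \<eta>) (mix_sample_pmf m Q)) \<le> 1 / 8)))"
proof (intro allI impI)
  fix \<alpha> :: real assume "1 \<le> \<alpha>"
  obtain j where j: "1 \<le> j" "256 * \<alpha> * real j \<le> real (g j)"
    using superlinear_exceeds[OF sl] .
  have "256 * real j \<le> real (g j)"
    using linear_le_if_scaled_le[OF \<open>1 \<le> \<alpha>\<close>] j(2) by simp
  then have "0 < 16 / real (g j)" "16 / real (g j) < 1" "0 < 1 / (32 * real j)" "1 / (32 * real j) < 1"
    using j(1) by simp_all
  then show "\<exists>\<eta> \<gamma>'::real. 0 < \<eta> \<and> \<eta> < 1 \<and> 0 < \<gamma>' \<and> \<gamma>' < 1 \<and>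
     (\<forall>m::nat. m \<ge> 1 \<longrightarrow> (\<exists>p \<in> Cg B g. \<exists>Q :: (nat \<times> nat) pmf pmf. set_pmf Q \<subseteq> Cg B g \<and>
        (\<forall>q \<in> set_pmf Q. tv_dist p q \<ge> 4 * \<alpha> * budget_sub \<eta> + 4 * \<gamma>') \<and>
        tv_dist (adv_apply (Vsub \<eta>) (sample_pmf m p))
                (adv_apply (Vsub \<eta>) (mix_sample_pmf m Q)) \<le> 1 / 8))"
    using exists_separated_indistinguishable_mixture[where g = g and j = j, OF enum \<open>1 \<le> \<alpha>\<close> j]
    by blast
qed

end
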